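(* Consider the semi-discrete finite volume scheme with Lax–Friedrichs flux for the multicomponent compressible Euler system described in the context. Assume $\rho_{i,K}(0)>0$ for all cells $K\in\mathcal{T}_h$ and all $i=1,\dots,\mathrm{n}$, and assume that the discrete velocity satisfies $\mathbf{u}_h=\mathbf{m}_h/\rho_h\in L^2(0,T;L^\infty(\Omega))$. Then there is a constant $\bar\rho_h>0$ such that the numerical solution satisfies \[ \rho_{i,K}(t)\ge \bar\rho_h>0\qquad\text{for all }K\in\mathcal{T}_h,\ t\in[0,T],\ i=1,\dots,\mathrm{n}. \]
   Context: Domain: $\Omega=([0,1]|_{\{0,1\}})^N$, $N\in\{1,2,3\}$ (flat torus, periodic). Multicomponent Euler system for $\mathrm{n}$ species: unknowns partial densities $\rho_i$, momentum $\mathbf{m}=\rho\mathbf{u}$, total energy $\mathcal{E}$, with $\rho=\sum_{i=1}^{\mathrm{n}}\rho_i$: $\partial_t\rho_i+\nabla\cdot(\rho_i\mathbf{u})=0$, $\partial_t\mathbf{m}+\nabla\cdot(\rho\mathbf{u}\otimes\mathbf{u}+p\mathbb{I})=0$, $\partial_t\mathcal{E}+\nabla\cdot((\mathcal{E}+p)\mathbf{u})=0$. Write $\mathbf{U}=(\rho_1,\dots,\rho_{\mathrm{n}},\mathbf{m},\mathcal{E})$ and $\mathbf{f}(\mathbf{U})=(\rho_1\mathbf{u},\dots,\rho_{\mathrm{n}}\mathbf{u},\rho\mathbf{u}\otimes\mathbf{u}+p\mathbb{I},(\mathcal{E}+p)\mathbf{u})$. Closure: $p=\sum_i\rho_i r_i\mathbb{T}$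 with constants $r_i>0$, and $\mathcal{E}=\sum_i\rho_i(e_{0i}+c_{vi}\mathbb{T})+\frac12\rho|\mathbf{u}|^2$ with constants $e_{0i}$, $c_{vi}>0$; $c_{pi}=c_{vi}+r_i$. Scheme: uniform Cartesian mesh $\mathcal{T}_h$ of $\Omega$ with mesh size $h$, cells $K$ with $|K|=h^N$, interfaces $S_{KL}=\partial K\cap\partial L$ with $|S_{KL}|=h^{N-1}$, unit normal $\mathbf{n}_{KL}$ from $K$ to $L$, $\mathcal{N}(K)$ the set of cells sharing a face with $K$. The piecewise constant solution $\mathbf{U}_h(t)$ has value $\mathbf{U}_K(t)$ on $K$, $\mathbf{U}_K(0)$ is the cell average of the initial data, and $|K|\frac{d}{dt}\mathbf{U}_K+\sum_{L\in\mathcal{N}(K)}|S_{KL}|\mathbf{F}_{KL}=0$, with $\mathbf{F}_{KL}=\frac{\mathbf{f}(\mathbf{U}_K)+\mathbf{f}(\mathbf{U}_L)}{2}\cdot\mathbf{n}_{KL}-\frac{\lambda_{KL}}{2}(\mathbf{U}_L-\mathbf{U}_K)$, $\lambda_{KL}=\max(|\mathbf{u}_K|+c_{\rm mix}(\mathbf{U}_K),|\mathbf{u}_L|+c_{\rm mix}(\mathbf{U}_L))$, $\mathbf{u}_K=\mathbf{m}_K/\rho_K$, $c_{\rm mix}^2=\gamma_{\rm mix}p/\rho$, $\gamma_{\rm mix}=\sum_i\rho_ic_{pi}/\sum_i\rho_ic_{vi}$. The global bound $\lambda=\max_K(|\mathbf{u}_K|+c_{\rm mix}(\mathbf{U}_K))\ge\lambda_{KL}$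 may be used as the viscosity coefficient. $\rho_{i,K}(t)$ denotes the $\rho_i$-component of $\mathbf{U}_K(t)$. *)

theory Defs
  imports "HOL-Analysis.Analysis"
begin

text \<open>Uniform Cartesian mesh of the flat torus [0,1]^N with M cells per direction,
  h = 1/M.  Cells are indexed by multi-indices K :: 'd \<Rightarrow> nat with K j < M,
  where the finite type 'd indexes the N = CARD('d) space directions.\<close>

definition cells :: "nat \<Rightarrow> ('d \<Rightarrow> nat) set" where
  "cells M = {K. \<forall>j. K j < M}"

text \<open>Periodic neighbour of K across the face in direction j, on the side s
  (s = True: +e_j, s = False: -e_j).\<close>
definition shift :: "nat \<Rightarrow> ('d \<Rightarrow> nat) \<Rightarrow> 'd \<Rightarrow> bool \<Rightarrow> ('d \<Rightarrow> nat)" where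
  "shift M K j s = K(j := (if s then (K j + 1) mod M else (K j + M - 1) mod M))"

definition normal :: "'d::finite \<Rightarrow> bool \<Rightarrow> real^'d" where
  "normal j s = (\<chi> k. if k = j then (if s then 1 else -1) else 0)"

text \<open>Mixture quantities for a state (partial densities rs, momentum m, total energy E),
  with n species and species constants r, cv, e0 (cp i = cv i + r i).\<close>

definition rho_tot :: "nat \<Rightarrow> (nat \<Rightarrow> real) \<Rightarrow> real" where
  "rho_tot n rs = (\<Sum>i<n. rs i)"

definition vel :: "nat \<Rightarrow> (nat \<Rightarrow> real) \<Rightarrow> real^'d \<Rightarrow> real^'d" where
  "vel n rs m = (1 / rho_tot n rs) *\<^sub>R m"

definition temp :: "nat \<Rightarrow> (nat \<Rightarrow> real) \<Rightarrow> (nat \<Rightarrow> real)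
    \<Rightarrow> (nat \<Rightarrow> real) \<Rightarrow> real^'d \<Rightarrow> real \<Rightarrow> real" where
  "temp n cv e0 rs m E =
     (E - (\<Sum>i<n. rs i * e0 i) - 1/2 * rho_tot n rs * (norm (vel n rs m))\<^sup>2)
       / (\<Sum>i<n. rs i * cv i)"

definition pres :: "nat \<Rightarrow> (nat \<Rightarrow> real) \<Rightarrow> (nat \<Rightarrow> real) \<Rightarrow> (nat \<Rightarrow> real)
    \<Rightarrow> (nat \<Rightarrow> real) \<Rightarrow> real^'d \<Rightarrow> real \<Rightarrow> real" where
  "pres n r cv e0 rs m E = (\<Sum>i<n. rs i * r i) * temp n cv e0 rs m E"

definition gamma_mix :: "nat \<Rightarrow> (nat \<Rightarrow> real) \<Rightarrow> (nat \<Rightarrow> real) \<Rightarrow> (nat \<Rightarrow> real) \<Rightarrow> real" where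
  "gamma_mix n r cv rs = (\<Sum>i<n. rs i * (cv i + r i)) / (\<Sum>i<n. rs i * cv i)"

definition cmix_sq :: "nat \<Rightarrow> (nat \<Rightarrow> real) \<Rightarrow> (nat \<Rightarrow> real) \<Rightarrow> (nat \<Rightarrow> real)
    \<Rightarrow> (nat \<Rightarrow> real) \<Rightarrow> real^'d \<Rightarrow> real \<Rightarrow> real" where
  "cmix_sq n r cv e0 rs m E = gamma_mix n r cv rs * pres n r cv e0 rs m E / rho_tot n rs"

definition cmix :: "nat \<Rightarrow> (nat \<Rightarrow> real) \<Rightarrow> (nat \<Rightarrow> real) \<Rightarrow> (nat \<Rightarrow> real)
    \<Rightarrow> (nat \<Rightarrow> real) \<Rightarrow> real^'d \<Rightarrow> real \<Rightarrow> real" where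
  "cmix n r cv e0 rs m E = sqrt (cmix_sq n r cv e0 rs m E)"

type_synonym 'd state = "(nat \<Rightarrow> real) \<times> (real^'d) \<times> real"

definition wavespeed :: "nat \<Rightarrow> (nat \<Rightarrow> real) \<Rightarrow> (nat \<Rightarrow> real) \<Rightarrow> (nat \<Rightarrow> real)
    \<Rightarrow> 'd::finite state \<Rightarrow> real" where
  "wavespeed n r cv e0 U = (case U of (rs, m, E) \<Rightarrow> norm (vel n rs m) + cmix n r cv e0 rs m E)"

definition lamKL :: "nat \<Rightarrow> (nat \<Rightarrow> real) \<Rightarrow> (nat \<Rightarrow> real) \<Rightarrow> (nat \<Rightarrow> real)
    \<Rightarrow> 'd::finite state \<Rightarrow> 'd state \<Rightarrow> real" where
  "lamKL n r cv e0 UK UL = max (wavespeed n r cv e0 UK) (wavespeed n r cv e0 UL)"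

definition flux_rho :: "nat \<Rightarrow> (nat \<Rightarrow> real) \<Rightarrow> (nat \<Rightarrow> real) \<Rightarrow> (nat \<Rightarrow> real)
    \<Rightarrow> 'd::finite state \<Rightarrow> 'd state \<Rightarrow> real^'d \<Rightarrow> nat \<Rightarrow> real" where
  "flux_rho n r cv e0 UK UL nv i =
    (case UK of (rsK, mK, EK) \<Rightarrow> case UL of (rsL, mL, EL) \<Rightarrow>
      (rsK i * (vel n rsK mK \<bullet> nv) + rsL i * (vel n rsL mL \<bullet> nv)) / 2
      - lamKL n r cv e0 UK UL / 2 * (rsL i - rsK i))"

definition flux_m :: "nat \<Rightarrow> (nat \<Rightarrow> real) \<Rightarrow> (nat \<Rightarrow> real) \<Rightarrow> (nat \<Rightarrow> real)
    \<Rightarrow> 'd::finite state \<Rightarrow> 'd::finite state \<Rightarrow> real^'d \<Rightarrow> real^'d" where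
  "flux_m n r cv e0 UK UL nv =
    (case UK of (rsK, mK, EK) \<Rightarrow> case UL of (rsL, mL, EL) \<Rightarrow>
      (1/2) *\<^sub>R ((rho_tot n rsK * (vel n rsK mK \<bullet> nv)) *\<^sub>R vel n rsK mK
                  + pres n r cv e0 rsK mK EK *\<^sub>R nv
                + (rho_tot n rsL * (vel n rsL mL \<bullet> nv)) *\<^sub>R vel n rsL mL
                  + pres n r cv e0 rsL mL EL *\<^sub>R nv)
      - (lamKL n r cv e0 UK UL / 2) *\<^sub>R (mL - mK))"

definition flux_E :: "nat \<Rightarrow> (nat \<Rightarrow> real) \<Rightarrow> (nat \<Rightarrow> real) \<Rightarrow> (nat \<Rightarrow> real)
    \<Rightarrow> 'd::finite state \<Rightarrow> 'd state \<Rightarrow> real^'d \<Rightarrow> real" where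
  "flux_E n r cv e0 UK UL nv =
    (case UK of (rsK, mK, EK) \<Rightarrow> case UL of (rsL, mL, EL) \<Rightarrow>
      ((EK + pres n r cv e0 rsK mK EK) * (vel n rsK mK \<bullet> nv)
       + (EL + pres n r cv e0 rsL mL EL) * (vel n rsL mL \<bullet> nv)) / 2
      - lamKL n r cv e0 UK UL / 2 * (EL - EK))"

end

theory Submission
  imports Defs
begin

text \<open>Compare every partial density with the barrier \<open>c exp(-\<integral>\<^sub>0\<^sup>t b)\<close>, where \<open>c\<close> is
  below all initial densities and the rate \<open>b\<close> dominates \<open>N M |u\<^sub>h(t)|\<^sub>\<infinity>\<close>; it is integrable
  because \<open>u\<^sub>h \<in> L\<^sup>2(L\<^sup>\<infinity>)\<close>.  At the first time the barrier touches some \<open>\<rho>\<^sub>i\<^sub>,\<^sub>K\<close>, the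
  cell \<open>K\<close> minimises \<open>\<rho>\<^sub>i\<close> over the mesh.  Since \<open>\<lambda>\<^sub>K\<^sub>L \<ge> |u\<^sub>L|\<close>, the Lax--Friedrichs
  flux of \<open>\<rho>\<^sub>i\<close> through each face of \<open>K\<close> is then at most \<open>\<rho>\<^sub>i\<^sub>,\<^sub>K (u\<^sub>K\<cdot>n + |u\<^sub>h|\<^sub>\<infinity>)/2\<close>, and
  the \<open>u\<^sub>K\<cdot>n\<close> terms cancel over opposite faces.  Hence
  \<open>d\<rho>\<^sub>i\<^sub>,\<^sub>K/dt \<ge> -N M \<rho>\<^sub>i\<^sub>,\<^sub>K |u\<^sub>h|\<^sub>\<infinity>\<close>, which exceeds the barrier's slope, so the barrier
  cannot have been reached from below.\<close>

lemma finite_cells: "finite (cells M :: ('d::finite \<Rightarrow> nat) set)"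
proof (rule finite_subset)
  show "cells M \<subseteq> PiE (UNIV :: 'd set) (\<lambda>_. {..<M})"
    by (auto simp: cells_def PiE_def extensional_def)
qed (simp add: finite_PiE)

lemma cells_nonempty: "0 < M \<Longrightarrow> cells M \<noteq> {}"
  by (auto simp: cells_def)

lemma shift_in_cells: "0 < M \<Longrightarrow> K \<in> cells M \<Longrightarrow> shift M K j s \<in> cells M"
  by (auto simp: cells_def shift_def)

lemma normal_eq_axis: "normal j s = (if s then 1 else -1) *\<^sub>R axis j 1"
  by (simp add: normal_def axis_def vec_eq_iff)

lemma normal_False: "normal j False = - normal j True"
  by (simp add: normal_eq_axis)

lemma norm_normal [simp]: "norm (normal j s) = 1"
  by (simp add: normal_eq_axis)

lemma lax_friedrichs_upwind_le:
  fixes x y a b lam F :: real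
  assumes "0 \<le> x" "x \<le> y" "\<bar>b\<bar> \<le> lam" "\<bar>b\<bar> \<le> F"
  shows "(x * a + y * b) / 2 - lam * (y - x) / 2 \<le> x * a / 2 + x * F / 2"
proof -
  have "(b - lam) * (y - x) \<le> 0"
    using assms by (intro mult_nonpos_nonneg) auto
  moreover have "x * b \<le> x * F"
    using assms by (intro mult_left_mono) auto
  ultimately show ?thesis
    by (simp add: field_simps)
qed

lemma le_power2_plus_one: "(x::real) \<le> x\<^sup>2 + 1"
proof -
  have "0 \<le> (x - 1/2)\<^sup>2"
    by simp
  then show ?thesis
    by (simp add: power2_eq_square algebra_simps)
qed

lemma continuous_Max:
  fixes g :: "'k \<Rightarrow> 'a::t2_space \<Rightarrow> 'b::linorder_topology"
  assumes "finite I" "I \<noteq> {}" "\<And>k. k \<in> I \<Longrightarrow> continuous F (g k)"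
  shows "continuous F (\<lambda>x. Max ((\<lambda>k. g k x) ` I))"
  using assms
proof (induction I rule: finite_ne_induct)
  case (insert k I)
  then show ?case
    by (simp add: continuous_max)
qed simp

lemma finite_positive_lower_bound:
  fixes f :: "'a \<Rightarrow> real"
  assumes "finite A" "\<And>x. x \<in> A \<Longrightarrow> 0 < f x"
  shows "\<exists>c>0. \<forall>x\<in>A. c < f x"
proof (intro exI conjI ballI)
  let ?c = "Min (insert 1 (f ` A)) / 2"
  show "0 < ?c"
    using assms by simp
  show "?c < f x" if "x \<in> A" for x
  proof -
    have "Min (insert 1 (f ` A)) \<le> f x"
      using assms(1) that by (intro Min_le) auto
    with assms(2)[OF that] show ?thesis by linarith
  qed
qed

lemma exp_neg_integral_has_real_derivative:
  fixes b :: "real \<Rightarrow> real"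
  assumes "b integrable_on {0..T}" "t \<in> {0..T}" "continuous (at t within {0..T}) b"
  shows "((\<lambda>s. c * exp (- integral {0..s} b)) has_real_derivative
            - (c * exp (- integral {0..t} b)) * b t) (at t within {0..T})"
proof -
  have "((\<lambda>s. integral {0..s} b) has_real_derivative b t) (at t within {0..T})"
    using integral_has_vector_derivative_continuous_at[of b 0 T t "{}"] assms
    by (simp add: has_real_derivative_iff_has_vector_derivative)
  then show ?thesis
    by (auto intro!: derivative_eq_intros)
qed

lemma continuous_norm_vel:
  fixes rs :: "real \<Rightarrow> nat \<Rightarrow> real" and ms :: "real \<Rightarrow> real^'d::finite"
  assumes "\<And>i. i < n \<Longrightarrow> continuous (at t within S) (\<lambda>s. rs s i)"
    and "continuous (at t within S) ms" and "rho_tot n (rs t) \<noteq> 0"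
  shows "continuous (at t within S) (\<lambda>s. norm (vel n (rs s) (ms s)))"
  using assms unfolding vel_def rho_tot_def
  by (auto intro!: continuous_intros)

lemma flux_rho_le_at_minimum:
  assumes "0 \<le> rsK i" "rsK i \<le> rsL i" "0 \<le> cmix_sq n r cv e0 rsL mL EL"
    and "norm (vel n rsL mL) \<le> F" and "norm nv = 1"
  shows "flux_rho n r cv e0 (rsK, mK, EK) (rsL, mL, EL) nv i
           \<le> rsK i * (vel n rsK mK \<bullet> nv) / 2 + rsK i * F / 2"
proof -
  have "\<bar>vel n rsL mL \<bullet> nv\<bar> \<le> norm (vel n rsL mL)"
    using Cauchy_Schwarz_ineq2[of "vel n rsL mL" nv] assms(5) by simp
  moreover have "norm (vel n rsL mL) \<le> lamKL n r cv e0 (rsK, mK, EK) (rsL, mL, EL)"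
    using assms(3) by (simp add: lamKL_def wavespeed_def cmix_def le_max_iff_disj)
  ultimately show ?thesis
    unfolding flux_rho_def using assms(1,2,4)
    by (auto intro!: lax_friedrichs_upwind_le)
qed

lemma flux_rho_opposite_faces_le:
  assumes "0 \<le> rsK i" and "\<And>s. rsK i \<le> rs s i"
    and "\<And>s. 0 \<le> cmix_sq n r cv e0 (rs s) (ms s) (Es s)"
    and "\<And>s. norm (vel n (rs s) (ms s)) \<le> F"
  shows "(\<Sum>s\<in>UNIV. flux_rho n r cv e0 (rsK, mK, EK) (rs s, ms s, Es s) (normal j s) i)
           \<le> rsK i * F"
proof -
  let ?bound = "\<lambda>s. rsK i * (vel n rsK mK \<bullet> normal j s) / 2 + rsK i * F / 2"
  have "(\<Sum>s\<in>UNIV. flux_rho n r cv e0 (rsK, mK, EK) (rs s, ms s, Es s) (normal j s) i)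
          \<le> (\<Sum>s\<in>UNIV. ?bound s)"
    using assms by (intro sum_mono flux_rho_le_at_minimum) auto
  also have "\<dots> = rsK i * F"
    by (simp add: UNIV_bool normal_False field_simps)
  finally show ?thesis .
qed

lemma species_rate_ge_at_minimum:
  fixes rs :: "('d::finite \<Rightarrow> nat) \<Rightarrow> nat \<Rightarrow> real" and ms :: "('d \<Rightarrow> nat) \<Rightarrow> real^'d"
    and Es :: "('d \<Rightarrow> nat) \<Rightarrow> real"
  assumes M: "0 < M" and h: "h = 1 / real M" and K: "K \<in> cells M"
    and balance: "h ^ CARD('d) * d
        + (\<Sum>j\<in>UNIV. \<Sum>s\<in>UNIV. h ^ (CARD('d) - 1) *
             flux_rho n r cv e0 (rs K, ms K, Es K)
               (rs (shift M K j s), ms (shift M K j s), Es (shift M K j s)) (normal j s) i) = 0"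
    and nonneg: "0 \<le> rs K i" and minimal: "\<forall>L\<in>cells M. rs K i \<le> rs L i"
    and cmix_real: "\<forall>L\<in>cells M. 0 \<le> cmix_sq n r cv e0 (rs L) (ms L) (Es L)"
    and vel_bound: "\<forall>L\<in>cells M. norm (vel n (rs L) (ms L)) \<le> F"
  shows "- (real CARD('d) * real M * rs K i * F) \<le> d"
proof -
  define outflow where "outflow = (\<Sum>j\<in>UNIV. \<Sum>s\<in>UNIV.
      flux_rho n r cv e0 (rs K, ms K, Es K)
        (rs (shift M K j s), ms (shift M K j s), Es (shift M K j s)) (normal j s) i)"
  have "outflow \<le> (\<Sum>j\<in>(UNIV :: 'd set). rs K i * F)"
    unfolding outflow_def using shift_in_cells[OF M K] nonneg minimal cmix_real vel_bound
    by (intro sum_mono flux_rho_opposite_faces_le) auto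
  then have outflow_le: "outflow \<le> real CARD('d) * rs K i * F"
    by simp
  have "h ^ CARD('d) = h * h ^ (CARD('d) - 1)"
    by (simp add: power_eq_if)
  then have "h ^ (CARD('d) - 1) * (h * d + outflow) = 0"
    using balance unfolding outflow_def by (simp add: sum_distrib_left algebra_simps)
  then have "d = - real M * outflow"
    using M h by (simp add: field_simps)
  then show ?thesis
    using outflow_le M by (simp add: mult_left_mono algebra_simps)
qed

lemma first_touching_time:
  fixes g :: "'k \<Rightarrow> real \<Rightarrow> real" and phi :: "real \<Rightarrow> real"
  assumes "finite I"
    and g_cont: "\<And>k. k \<in> I \<Longrightarrow> continuous_on {0..T} (g k)"
    and phi_cont: "continuous_on {0..T} phi"
    and init: "\<And>k. k \<in> I \<Longrightarrow> phi 0 < g k 0"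
    and touches: "\<exists>k\<in>I. \<exists>t\<in>{0..T}. g k t \<le> phi t"
  obtains t1 k where "t1 \<in> {0<..T}" "k \<in> I" "g k t1 = phi t1" "\<forall>l\<in>I. phi t1 \<le> g l t1"
    and "\<And>t l. t \<in> {0..<t1} \<Longrightarrow> l \<in> I \<Longrightarrow> phi t < g l t"
proof -
  define S where "S = {t \<in> {0..T}. \<exists>k\<in>I. g k t \<le> phi t}"
  have "S \<noteq> {}"
    using touches unfolding S_def by blast
  moreover have "bdd_below S"
    unfolding S_def by (rule bdd_belowI[of _ 0]) auto
  moreover have "closed S"
  proof -
    have "S = (\<Union>k\<in>I. {t \<in> {0..T}. g k t \<le> phi t})"
      unfolding S_def by blast
    moreover have "closed {t \<in> {0..T}. g k t \<le> phi t}" if "k \<in> I" for k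
      using continuous_on_closed_Collect_le[OF g_cont[OF that] phi_cont] by simp
    ultimately show ?thesis
      using \<open>finite I\<close> by auto
  qed
  ultimately have "Inf S \<in> S"
    by (rule closed_contains_Inf)
  define t1 where "t1 = Inf S"
  obtain k where k: "k \<in> I" "g k t1 \<le> phi t1" and t1: "t1 \<in> {0..T}"
    using \<open>Inf S \<in> S\<close> unfolding S_def t1_def by auto
  have before: "phi t < g l t" if "t \<in> {0..<t1}" "l \<in> I" for t l
    using cInf_lower[OF _ \<open>bdd_below S\<close>, of t] that t1 unfolding S_def t1_def by force
  have "t1 \<noteq> 0"
    using k init by force
  then have "0 < t1"
    using t1 by simp
  have at_t1: "phi t1 \<le> g l t1" if "l \<in> I" for l
  proof -
    have "continuous_on {0..t1} (\<lambda>s. g l s - phi s)"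
      using t1 g_cont[OF that] phi_cont
      by (auto intro!: continuous_intros elim: continuous_on_subset)
    then have "0 \<le> g l t1 - phi t1"
      using continuous_ge_on_closure[of "{0..<t1}" "\<lambda>s. g l s - phi s" t1 0]
        before[OF _ that] \<open>0 < t1\<close> by fastforce
    then show ?thesis by simp
  qed
  show thesis
  proof (rule that)
    show "t1 \<in> {0<..T}" "k \<in> I" "g k t1 = phi t1" "\<forall>l\<in>I. phi t1 \<le> g l t1"
      using \<open>0 < t1\<close> t1 k at_t1 by (auto intro: order.antisym)
  qed (rule before)
qed

lemma barrier_stays_below:
  fixes g :: "'k \<Rightarrow> real \<Rightarrow> real" and phi :: "real \<Rightarrow> real"
  assumes fin: "finite I"
    and g_cont: "\<And>k. k \<in> I \<Longrightarrow> continuous_on {0..T} (g k)"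
    and phi_cont: "continuous_on {0..T} phi"
    and init: "\<And>k. k \<in> I \<Longrightarrow> phi 0 < g k 0"
    and touching: "\<And>k t. k \<in> I \<Longrightarrow> t \<in> {0<..T} \<Longrightarrow> g k t = phi t
        \<Longrightarrow> \<forall>l\<in>I. phi t \<le> g l t
        \<Longrightarrow> \<exists>D>0. ((\<lambda>s. g k s - phi s) has_real_derivative D) (at t within {0..T})"
  shows "\<forall>k\<in>I. \<forall>t\<in>{0..T}. phi t < g k t"
proof (rule ccontr)
  assume "\<not> ?thesis"
  then have "\<exists>k\<in>I. \<exists>t\<in>{0..T}. g k t \<le> phi t"
    by (auto simp: not_less)
  then obtain t1 k where t1: "t1 \<in> {0<..T}" and k: "k \<in> I" "g k t1 = phi t1"
    and "\<forall>l\<in>I. phi t1 \<le> g l t1" and before: "\<And>t l. t \<in> {0..<t1} \<Longrightarrow> l \<in> I \<Longrightarrow> phi t < g l t"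
    using first_touching_time[of I T g phi, OF fin g_cont phi_cont init] by blast
  then obtain D where "0 < D" and D: "((\<lambda>s. g k s - phi s) has_real_derivative D) (at t1 within {0..T})"
    using touching by blast
  obtain \<delta> where "0 < \<delta>"
    and increasing: "\<forall>s>0. t1 - s \<in> {0..T} \<longrightarrow> s < \<delta> \<longrightarrow> g k (t1 - s) - phi (t1 - s) < g k t1 - phi t1"
    using has_real_derivative_pos_inc_left[OF D \<open>0 < D\<close>] by blast
  define s where "s = min (\<delta> / 2) t1"
  have "0 < s" "s < \<delta>" "t1 - s \<in> {0..<t1}"
    using \<open>0 < \<delta>\<close> t1 by (auto simp: s_def)
  then have "g k (t1 - s) - phi (t1 - s) < 0"
    using increasing t1 k by auto
  with before[OF \<open>t1 - s \<in> {0..<t1}\<close> k(1)] show False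
    by simp
qed

locale lax_friedrichs_solution =
  fixes n M :: nat and h T :: real and r cv e0 :: "nat \<Rightarrow> real"
    and rho drho :: "('d::finite \<Rightarrow> nat) \<Rightarrow> real \<Rightarrow> nat \<Rightarrow> real"
    and m :: "('d \<Rightarrow> nat) \<Rightarrow> real \<Rightarrow> real^'d"
    and E :: "('d \<Rightarrow> nat) \<Rightarrow> real \<Rightarrow> real"
  assumes M_pos: "0 < M"
    and h_def: "h = 1 / real M"
    and d_rho: "\<And>K t i. K \<in> cells M \<Longrightarrow> t \<in> {0..T} \<Longrightarrow> i < n \<Longrightarrow>
        ((\<lambda>s. rho K s i) has_real_derivative drho K t i) (at t within {0..T})"
    and m_cont: "\<And>K t. K \<in> cells M \<Longrightarrow> t \<in> {0..T} \<Longrightarrow>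
        continuous (at t within {0..T}) (m K)"
    and scheme_rho: "\<And>K t i. K \<in> cells M \<Longrightarrow> t \<in> {0..T} \<Longrightarrow> i < n \<Longrightarrow>
        h ^ CARD('d) * drho K t i
        + (\<Sum>j\<in>UNIV. \<Sum>s\<in>UNIV. h ^ (CARD('d) - 1) *
             flux_rho n r cv e0 (rho K t, m K t, E K t)
               (rho (shift M K j s) t, m (shift M K j s) t, E (shift M K j s) t)
               (normal j s) i) = 0"
    and cmix_real: "\<And>K t. K \<in> cells M \<Longrightarrow> t \<in> {0..T} \<Longrightarrow>
        0 \<le> cmix_sq n r cv e0 (rho K t) (m K t) (E K t)"
    and init_pos: "\<And>K i. K \<in> cells M \<Longrightarrow> i < n \<Longrightarrow> 0 < rho K 0 i"
    and vel_L2Linf: "set_integrable lborel {0..T}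
        (\<lambda>t. (Max ((\<lambda>K. norm (vel n (rho K t) (m K t))) ` cells M))\<^sup>2)"
begin

definition vmax :: "real \<Rightarrow> real" where
  "vmax t = Max ((\<lambda>K. norm (vel n (rho K t) (m K t))) ` cells M)"

lemma vel_le_vmax: "K \<in> cells M \<Longrightarrow> norm (vel n (rho K t) (m K t)) \<le> vmax t"
  unfolding vmax_def by (simp add: finite_cells)

lemma continuous_rho:
  "K \<in> cells M \<Longrightarrow> t \<in> {0..T} \<Longrightarrow> i < n \<Longrightarrow>
    continuous (at t within {0..T}) (\<lambda>s. rho K s i)"
  using d_rho by (rule DERIV_continuous)

lemma continuous_vmax:
  assumes "t \<in> {0..T}" and "\<And>L. L \<in> cells M \<Longrightarrow> rho_tot n (rho L t) \<noteq> 0"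
  shows "continuous (at t within {0..T}) vmax"
proof -
  have "continuous (at t within {0..T}) (\<lambda>s. norm (vel n (rho L s) (m L s)))"
    if L: "L \<in> cells M" for L
  proof (rule continuous_norm_vel)
    show "continuous (at t within {0..T}) (\<lambda>s. rho L s i)" if "i < n" for i
      using L assms(1) that by (rule continuous_rho)
    show "continuous (at t within {0..T}) (m L)"
      using L assms(1) by (rule m_cont)
    show "rho_tot n (rho L t) \<noteq> 0"
      using L by (rule assms(2))
  qed
  then show ?thesis
    unfolding vmax_def[abs_def] using finite_cells cells_nonempty[OF M_pos]
    by (intro continuous_Max) auto
qed

text \<open>The square makes the rate integrable, and the \<open>+ 1\<close> makes the comparison at a
  touching time strict.\<close>
definition barrier_rate :: "real \<Rightarrow> real" where
  "barrier_rate t = real CARD('d) * real M * ((vmax t)\<^sup>2 + 1) + 1"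

definition barrier :: "real \<Rightarrow> real \<Rightarrow> real" where
  "barrier c t = c * exp (- integral {0..t} barrier_rate)"

lemma barrier_rate_integrable: "barrier_rate integrable_on {0..T}"
proof -
  have "(\<lambda>t. (vmax t)\<^sup>2) integrable_on {0..T}"
    using set_borel_integral_eq_integral(1)[OF vel_L2Linf] unfolding vmax_def .
  then have "(\<lambda>t. (vmax t)\<^sup>2 + 1) integrable_on {0..T}"
    by (intro integrable_add integrable_const_ivl)
  then show ?thesis
    unfolding barrier_rate_def[abs_def]
    using integrable_on_cmult_left[of _ _ "real CARD('d) * real M"]
    by (intro integrable_add integrable_const_ivl) auto
qed

lemma barrier_antimono:
  assumes "0 \<le> c" and "t \<in> {0..T}"
  shows "barrier c T \<le> barrier c t"
proof -
  have "integral {0..t} barrier_rate \<le> integral {0..T} barrier_rate"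
    using assms(2) barrier_rate_integrable
    by (intro integral_subset_le integrable_on_subinterval)
       (auto simp: barrier_rate_def add_nonneg_nonneg)
  then show ?thesis
    using assms(1) by (simp add: barrier_def mult_left_mono)
qed

lemma rho_minus_barrier_has_pos_derivative:
  assumes "0 < c" and t: "t \<in> {0..T}" and K: "K \<in> cells M" and i: "i < n"
    and touching: "rho K t i = barrier c t"
    and above: "\<forall>L\<in>cells M. \<forall>j<n. barrier c t \<le> rho L t j"
  shows "\<exists>D>0. ((\<lambda>s. rho K s i - barrier c s) has_real_derivative D) (at t within {0..T})"
proof -
  define x where "x = barrier c t"
  have "0 < x"
    using \<open>0 < c\<close> by (simp add: x_def barrier_def)
  have "rho_tot n (rho L t) \<noteq> 0" if "L \<in> cells M" for L
  proof -
    have "0 < (\<Sum>j<n. rho L t j)"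
      using i above that \<open>0 < x\<close> unfolding x_def
      by (intro sum_pos) (auto intro: less_le_trans)
    then show ?thesis by (simp add: rho_tot_def)
  qed
  then have "continuous (at t within {0..T}) barrier_rate"
    unfolding barrier_rate_def[abs_def] using continuous_vmax[OF t] by (auto intro!: continuous_intros)
  then have "(barrier c has_real_derivative - x * barrier_rate t) (at t within {0..T})"
    unfolding barrier_def[abs_def] x_def barrier_def
    using exp_neg_integral_has_real_derivative[OF barrier_rate_integrable t] by blast
  then have deriv: "((\<lambda>s. rho K s i - barrier c s) has_real_derivative
      drho K t i + x * barrier_rate t) (at t within {0..T})"
    using DERIV_diff[OF d_rho[OF K t i]] by fastforce
  have "- (real CARD('d) * real M * x * vmax t) \<le> drho K t i"
    using species_rate_ge_at_minimum[OF M_pos h_def K scheme_rho[OF K t i]] \<open>0 < x\<close>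
      touching above i cmix_real t vel_le_vmax unfolding x_def by auto
  moreover have "real CARD('d) * real M * x * vmax t \<le> real CARD('d) * real M * x * ((vmax t)\<^sup>2 + 1)"
    using \<open>0 < x\<close> le_power2_plus_one by (intro mult_left_mono) auto
  ultimately have "0 < drho K t i + x * barrier_rate t"
    using \<open>0 < x\<close> unfolding barrier_rate_def by (simp add: algebra_simps)
  with deriv show ?thesis by blast
qed

lemma rho_gt_barrier:
  assumes "0 < c" and init: "\<And>K i. K \<in> cells M \<Longrightarrow> i < n \<Longrightarrow> c < rho K 0 i"
    and "K \<in> cells M" "t \<in> {0..T}" "i < n"
  shows "barrier c t < rho K t i"
proof -
  let ?g = "\<lambda>(K, i) s. rho K s i"
  have "\<forall>k\<in>cells M \<times> {..<n}. \<forall>t\<in>{0..T}. barrier c t < ?g k t"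
  proof (rule barrier_stays_below)
    show "continuous_on {0..T} (barrier c)"
      unfolding barrier_def[abs_def]
      by (intro continuous_intros indefinite_integral_continuous_1 barrier_rate_integrable)
    show "continuous_on {0..T} (?g k)" if "k \<in> cells M \<times> {..<n}" for k
      using that continuous_rho by (auto simp: continuous_on_eq_continuous_within)
    show "barrier c 0 < ?g k 0" if "k \<in> cells M \<times> {..<n}" for k
      using that init by (auto simp: barrier_def)
    show "\<exists>D>0. ((\<lambda>s. ?g k s - barrier c s) has_real_derivative D) (at t within {0..T})"
      if "k \<in> cells M \<times> {..<n}" "t \<in> {0<..T}" "?g k t = barrier c t"
        "\<forall>l\<in>cells M \<times> {..<n}. barrier c t \<le> ?g l t" for k t
      using that rho_minus_barrier_has_pos_derivative[OF \<open>0 < c\<close>, of t] by (cases k) auto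
  qed (rule finite_cartesian_product[OF finite_cells finite_lessThan])
  then show ?thesis
    using assms(3-5) by auto
qed

lemma positive_lower_bound: "\<exists>rho_bar>0. \<forall>K\<in>cells M. \<forall>t\<in>{0..T}. \<forall>i<n. rho_bar \<le> rho K t i"
proof -
  have "finite (cells M \<times> {..<n} :: (('d \<Rightarrow> nat) \<times> nat) set)"
    by (rule finite_cartesian_product[OF finite_cells finite_lessThan])
  then obtain c where "0 < c" and c: "\<forall>(K, i)\<in>cells M \<times> {..<n}. c < rho K 0 i"
    using finite_positive_lower_bound[of "cells M \<times> {..<n}" "\<lambda>(K, i). rho K 0 i"] init_pos
    by auto
  have "barrier c T \<le> rho K t i" if "K \<in> cells M" "t \<in> {0..T}" "i < n" for K t i
  proof -
    have "barrier c T \<le> barrier c t"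
      using \<open>0 < c\<close> that(2) by (simp add: barrier_antimono)
    also have "\<dots> < rho K t i"
      using \<open>0 < c\<close> c that by (intro rho_gt_barrier) auto
    finally show ?thesis by simp
  qed
  moreover have "0 < barrier c T"
    using \<open>0 < c\<close> by (simp add: barrier_def)
  ultimately show ?thesis
    by blast
qed

end

theorem theorem3p1:
  fixes n M :: nat and h T :: real
    and r cv e0 :: "nat \<Rightarrow> real"
    and rho drho :: "('d::finite \<Rightarrow> nat) \<Rightarrow> real \<Rightarrow> nat \<Rightarrow> real"
    and m dm :: "('d \<Rightarrow> nat) \<Rightarrow> real \<Rightarrow> real^'d"
    and E dE :: "('d \<Rightarrow> nat) \<Rightarrow> real \<Rightarrow> real"
  assumes dim: "CARD('d) \<in> {1, 2, 3}"
    and n_pos: "1 \<le> n"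
    and M_pos: "1 \<le> M"
    and h_def: "h = 1 / real M"
    and r_pos: "\<forall>i<n. 0 < r i"
    and cv_pos: "\<forall>i<n. 0 < cv i"
    \<comment> \<open>U_K(t) is differentiable on [0,T] and solves the semi-discrete scheme\<close>
    and d_rho: "\<forall>K\<in>cells M. \<forall>t\<in>{0..T}. \<forall>i<n.
        ((\<lambda>s. rho K s i) has_real_derivative drho K t i) (at t within {0..T})"
    and d_m: "\<forall>K\<in>cells M. \<forall>t\<in>{0..T}.
        (m K has_vector_derivative dm K t) (at t within {0..T})"
    and d_E: "\<forall>K\<in>cells M. \<forall>t\<in>{0..T}.
        (E K has_real_derivative dE K t) (at t within {0..T})"
    and scheme_rho: "\<forall>K\<in>cells M. \<forall>t\<in>{0..T}. \<forall>i<n.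
        h ^ CARD('d) * drho K t i
        + (\<Sum>j\<in>UNIV. \<Sum>s\<in>UNIV. h ^ (CARD('d) - 1) *
             flux_rho n r cv e0 (rho K t, m K t, E K t)
               (rho (shift M K j s) t, m (shift M K j s) t, E (shift M K j s) t)
               (normal j s) i) = 0"
    and scheme_m: "\<forall>K\<in>cells M. \<forall>t\<in>{0..T}.
        h ^ CARD('d) *\<^sub>R dm K t
        + (\<Sum>j\<in>UNIV. \<Sum>s\<in>UNIV. h ^ (CARD('d) - 1) *\<^sub>R
             flux_m n r cv e0 (rho K t, m K t, E K t)
               (rho (shift M K j s) t, m (shift M K j s) t, E (shift M K j s) t)
               (normal j s)) = 0"
    and scheme_E: "\<forall>K\<in>cells M. \<forall>t\<in>{0..T}.
        h ^ CARD('d) * dE K t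
        + (\<Sum>j\<in>UNIV. \<Sum>s\<in>UNIV. h ^ (CARD('d) - 1) *
             flux_E n r cv e0 (rho K t, m K t, E K t)
               (rho (shift M K j s) t, m (shift M K j s) t, E (shift M K j s) t)
               (normal j s)) = 0"
    \<comment> \<open>the sound speed c_mix = sqrt(gamma_mix p / rho) is real along the solution\<close>
    and cmix_real: "\<forall>K\<in>cells M. \<forall>t\<in>{0..T}. 0 \<le> cmix_sq n r cv e0 (rho K t) (m K t) (E K t)"
    \<comment> \<open>positive initial partial densities\<close>
    and init_pos: "\<forall>K\<in>cells M. \<forall>i<n. 0 < rho K 0 i"
    \<comment> \<open>u_h in L^2(0,T; L^infty(Omega))\<close>
    and vel_L2Linf: "set_integrable lborel {0..T}
        (\<lambda>t. (Max ((\<lambda>K. norm (vel n (rho K t) (m K t))) ` cells M))\<^sup>2)"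
  shows "\<exists>rho_bar > 0. \<forall>K\<in>cells M. \<forall>t\<in>{0..T}. \<forall>i<n. rho_bar \<le> rho K t i"
proof -
  have m_cont: "continuous (at t within {0..T}) (m K)" if "K \<in> cells M" "t \<in> {0..T}" for K t
    using d_m that by (blast intro: has_vector_derivative_continuous)
  have "0 < M"
    using M_pos by simp
  interpret lax_friedrichs_solution n M h T r cv e0 rho drho m E
    by unfold_locales
      (fact \<open>0 < M\<close> h_def vel_L2Linf | rule m_cont d_rho[rule_format] scheme_rho[rule_format]
          cmix_real[rule_format] init_pos[rule_format]; assumption)+
  show ?thesis
    by (rule positive_lower_bound)
qed

end
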